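(* Let $\mathcal{X}\subseteq\mathbb{R}^d$, let $k$ be a positive definite kernel on $\mathcal{X}$ with RKHS $H_k$, and let $f\in H_k$ with $\|f\|_{H_k}\le B$ for some $B>0$. Let $\lambda>0$, $n\ge1$, let $x_1,\dots,x_n\in\mathcal{X}$ and observations $y_i=f(x_i)+\epsilon_i$, $i=1,\dots,n$, where $\epsilon_1,\dots,\epsilon_n$ are i.i.d. real random variables satisfying $\mathbb{E}[e^{h\epsilon_i}]\le \exp(h^2R^2/2)$ for all $h\in\mathbb{R}$, for some $R>0$, and where $X_n=[x_1,\dots,x_n]^\top$ is independent of $E_n=[\epsilon_1,\dots,\epsilon_n]^\top$ (e.g. deterministic). Let $\mu_n(x)=k(x,X_n)^\top(k(X_n,X_n)+\lambda^2I_n)^{-1}Y_n$ with $Y_n=[y_1,\dots,y_n]^\top$, and $\sigma_n^2(x)=k(x,x)-k(x,X_n)^\top(k(X_n,X_n)+\lambda^2I_n)^{-1}k(x,X_n)$. For $\delta\in(0,1)$ set $\beta(\delta)=\frac{R}{\lambda}\sqrt{2\log(1/\delta)}$. Then for every fixed $x\in\mathcal{X}$, $$\Pr\big[f(x)\le \mu_n(x)+(B+\beta(\delta))\sigma_n(x)\big]\ge 1-\delta\quad\text{and}\quad \Pr\big[f(x)\ge \mu_n(x)-(B+\beta(\delta))\sigma_n(x)\big]\ge 1-\delta.$$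
   Context: $k(x,X_n)=[k(x,x_1),\dots,k(x,x_n)]^\top$, $k(X_n,X_n)=[k(x_i,x_j)]_{i,j=1}^n$, $I_n$ the $n\times n$ identity; $\sigma_n=\sqrt{\sigma_n^2}$. *)

theory Defs
  imports "HOL-Probability.Probability"
begin

text \<open>A finite linear combination  sum_i a_i k(., z_i)  is represented by the list of
  pairs (a_i, z_i).\<close>

definition kcomb :: "('a \<Rightarrow> 'a \<Rightarrow> real) \<Rightarrow> (real \<times> 'a) list \<Rightarrow> 'a \<Rightarrow> real" where
  "kcomb k c = (\<lambda>x. \<Sum>(a, z)\<leftarrow>c. a * k x z)"

definition kip :: "('a \<Rightarrow> 'a \<Rightarrow> real) \<Rightarrow> (real \<times> 'a) list \<Rightarrow> (real \<times> 'a) list \<Rightarrow> real" where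
  "kip k c d = (\<Sum>(a, z)\<leftarrow>c. \<Sum>(b, w)\<leftarrow>d. a * b * k z w)"

definition knorm :: "('a \<Rightarrow> 'a \<Rightarrow> real) \<Rightarrow> (real \<times> 'a) list \<Rightarrow> real" where
  "knorm k c = sqrt (kip k c c)"

definition kdiff :: "(real \<times> 'a) list \<Rightarrow> (real \<times> 'a) list \<Rightarrow> (real \<times> 'a) list" where
  "kdiff c d = c @ map (\<lambda>(b, w). (- b, w)) d"

definition pd_kernel :: "'a set \<Rightarrow> ('a \<Rightarrow> 'a \<Rightarrow> real) \<Rightarrow> bool" where
  "pd_kernel X k \<longleftrightarrow> (\<forall>x\<in>X. \<forall>y\<in>X. k x y = k y x) \<and>
     (\<forall>c. set (map snd c) \<subseteq> X \<longrightarrow> 0 \<le> kip k c c)"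

text \<open>H_k is the completion of the pre-Hilbert space span{k(.,z) | z in X}: its elements are
  the pointwise (on X) limits of Cauchy sequences of finite combinations, and the norm of
  such a limit is the limit of the norms.\<close>
definition in_rkhs_norm_le :: "'a set \<Rightarrow> ('a \<Rightarrow> 'a \<Rightarrow> real) \<Rightarrow> ('a \<Rightarrow> real) \<Rightarrow> real \<Rightarrow> bool" where
  "in_rkhs_norm_le X k f B \<longleftrightarrow>
     (\<exists>cs :: nat \<Rightarrow> (real \<times> 'a) list.
        (\<forall>m. set (map snd (cs m)) \<subseteq> X) \<and>
        (\<forall>e>0. \<exists>N. \<forall>m\<ge>N. \<forall>m'\<ge>N. knorm k (kdiff (cs m) (cs m')) < e) \<and>
        (\<forall>x\<in>X. (\<lambda>m. kcomb k (cs m) x) \<longlonglongrightarrow> f x) \<and>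
        (\<exists>L. (\<lambda>m. knorm k (cs m)) \<longlonglongrightarrow> L \<and> L \<le> B))"

definition (in prob_space) indep_rvs ::
  "'b measure \<Rightarrow> ('a \<Rightarrow> 'b) \<Rightarrow> 'c measure \<Rightarrow> ('a \<Rightarrow> 'c) \<Rightarrow> bool" where
  "indep_rvs Ma A Mb B \<longleftrightarrow> random_variable Ma A \<and> random_variable Mb B \<and>
     indep_set {A -` S \<inter> space M | S. S \<in> sets Ma} {B -` S \<inter> space M | S. S \<in> sets Mb}"

definition gram :: "('a \<Rightarrow> 'a \<Rightarrow> real) \<Rightarrow> ('n::finite \<Rightarrow> 'a) \<Rightarrow> real^'n^'n" where
  "gram k xs = (\<chi> i j. k (xs i) (xs j))"

definition kvec :: "('a \<Rightarrow> 'a \<Rightarrow> real) \<Rightarrow> 'a \<Rightarrow> ('n::finite \<Rightarrow> 'a) \<Rightarrow> real^'n" where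
  "kvec k x xs = (\<chi> i. k x (xs i))"

definition post_mean :: "('a \<Rightarrow> 'a \<Rightarrow> real) \<Rightarrow> real \<Rightarrow> ('n::finite \<Rightarrow> 'a) \<Rightarrow> real^'n \<Rightarrow> 'a \<Rightarrow> real" where
  "post_mean k lam xs Y x =
     kvec k x xs \<bullet> (matrix_inv (gram k xs + mat (lam\<^sup>2)) *v Y)"

definition post_var :: "('a \<Rightarrow> 'a \<Rightarrow> real) \<Rightarrow> real \<Rightarrow> ('n::finite \<Rightarrow> 'a) \<Rightarrow> 'a \<Rightarrow> real" where
  "post_var k lam xs x =
     k x x - kvec k x xs \<bullet> (matrix_inv (gram k xs + mat (lam\<^sup>2)) *v kvec k x xs)"

end

theory Submission
  imports Defs
begin

text \<open>Write \<open>w = (K + \<lambda>\<^sup>2 I)\<^sup>-\<^sup>1 k(x, X\<^sub>n)\<close> for the kernel ridge regression weights, so that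
  \<open>\<mu>\<^sub>n(x) = w\<cdot>F + w\<cdot>E\<close> with \<open>F = (f(x\<^sub>i))\<^sub>i\<close>. The error \<open>f(x) - w\<cdot>F\<close> is the RKHS inner product of
  \<open>f\<close> with the residual \<open>r = k(\<cdot>, x) - \<Sum>\<^sub>i w\<^sub>i k(\<cdot>, x\<^sub>i)\<close>, hence at most \<open>B \<parallel>r\<parallel>\<close> by Cauchy-Schwarz,
  and a direct computation gives \<open>\<sigma>\<^sub>n\<^sup>2(x) = \<parallel>r\<parallel>\<^sup>2 + \<lambda>\<^sup>2 |w|\<^sup>2\<close>. So both \<open>\<parallel>r\<parallel>\<close> and \<open>\<lambda> |w|\<close> are at most
  \<open>\<sigma>\<^sub>n(x)\<close>. Conditionally on the design, \<open>w\<cdot>E\<close> is a fixed linear combination of independent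
  \<open>R\<close>-sub-Gaussian variables, so the Chernoff bound gives
  \<open>w\<cdot>E \<le> R |w| \<surd>(2 log(1/\<delta>))\<close> with probability at least \<open>1 - \<delta>\<close>; independence of design and
  noise lets one integrate this conditional bound over the design.\<close>

section \<open>Finite kernel combinations\<close>

lemma kip_eq_sum_kcomb: "kip k d c = (\<Sum>(a, z)\<leftarrow>d. a * kcomb k c z)"
  unfolding kip_def kcomb_def case_prod_unfold
  by (simp add: sum_list_const_mult[symmetric] mult.assoc)

lemma kip_append_left: "kip k (c1 @ c2) d = kip k c1 d + kip k c2 d"
  by (simp add: kip_def)

lemma kip_append_right: "kip k c (d1 @ d2) = kip k c d1 + kip k c d2"
  unfolding kip_def case_prod_unfold by (simp add: sum_list_addf)

lemma kip_scale_left: "kip k (map (\<lambda>(a, z). (t * a, z)) c) d = t * kip k c d"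
  unfolding kip_def case_prod_unfold
  by (induction c) (auto simp: sum_list_const_mult[symmetric] algebra_simps o_def)

lemma kip_scale_right: "kip k c (map (\<lambda>(b, w). (t * b, w)) d) = t * kip k c d"
  unfolding kip_def case_prod_unfold
  by (induction c) (auto simp: sum_list_const_mult[symmetric] algebra_simps o_def)

lemma kip_swap: "kip k c d = (\<Sum>(b, w)\<leftarrow>d. \<Sum>(a, z)\<leftarrow>c. a * b * k z w)"
  unfolding kip_def case_prod_unfold by (induction c) (simp_all add: sum_list_addf)

lemma kip_commute:
  assumes sym: "\<forall>x\<in>X. \<forall>y\<in>X. k x y = k y x"
    and c: "set (map snd c) \<subseteq> X" and d: "set (map snd d) \<subseteq> X"
  shows "kip k c d = kip k d c"
proof -
  have "(\<Sum>(a, z)\<leftarrow>c. a * b * k z w) = (\<Sum>(a, z)\<leftarrow>c. b * a * k w z)" if "w \<in> X" for b w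
  proof (intro arg_cong[where f = sum_list] map_cong refl)
    fix p assume "p \<in> set c"
    then have "snd p \<in> X" using c by auto
    then show "(case p of (a, z) \<Rightarrow> a * b * k z w) = (case p of (a, z) \<Rightarrow> b * a * k w z)"
      using sym \<open>w \<in> X\<close> by (cases p) simp
  qed
  then have "(\<Sum>(b, w)\<leftarrow>d. \<Sum>(a, z)\<leftarrow>c. a * b * k z w) = (\<Sum>(b, w)\<leftarrow>d. \<Sum>(a, z)\<leftarrow>c. b * a * k w z)"
    using d by (intro arg_cong[where f = sum_list] map_cong refl) auto
  then show ?thesis unfolding kip_swap[of k c d] by (simp only: kip_def)
qed

lemma quadratic_nonneg_imp_discriminant_le:
  fixes a b c :: real
  assumes nonneg: "\<And>t. 0 \<le> a + 2 * t * b + t\<^sup>2 * c" and "c \<ge> 0"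
  shows "b\<^sup>2 \<le> a * c"
proof (cases "c = 0")
  case True
  have "b = 0"
  proof (rule ccontr)
    assume "b \<noteq> 0"
    then have "a + 2 * (- (a + 1) / (2 * b)) * b + (- (a + 1) / (2 * b))\<^sup>2 * c = -1"
      using True by (simp add: field_simps)
    then show False using nonneg[of "- (a + 1) / (2 * b)"] by simp
  qed
  then show ?thesis using True by simp
next
  case False
  with \<open>c \<ge> 0\<close> have "c > 0" by simp
  have "a + 2 * (- b / c) * b + (- b / c)\<^sup>2 * c = a - b\<^sup>2 / c"
    using \<open>c > 0\<close> by (simp add: field_simps power2_eq_square)
  then have "b\<^sup>2 / c \<le> a" using nonneg[of "- b / c"] by simp
  then show ?thesis using \<open>c > 0\<close> by (simp add: pos_divide_le_eq)
qed

lemma kip_Cauchy_Schwarz: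
  assumes pd: "pd_kernel X k" and c: "set (map snd c) \<subseteq> X" and d: "set (map snd d) \<subseteq> X"
  shows "\<bar>kip k d c\<bar> \<le> knorm k c * knorm k d"
proof -
  have sym: "\<forall>x\<in>X. \<forall>y\<in>X. k x y = k y x" and psd: "\<And>c. set (map snd c) \<subseteq> X \<Longrightarrow> 0 \<le> kip k c c"
    using pd by (auto simp: pd_kernel_def)
  have "0 \<le> kip k c c + 2 * t * kip k d c + t\<^sup>2 * kip k d d" for t
  proof -
    let ?e = "c @ map (\<lambda>(b, w). (t * b, w)) d"
    have "kip k ?e ?e = kip k c c + 2 * t * kip k d c + t\<^sup>2 * kip k d d"
      unfolding kip_append_left kip_append_right kip_scale_left kip_scale_right
      using kip_commute[OF sym c d] by (simp add: power2_eq_square algebra_simps)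
    moreover have "set (map snd ?e) \<subseteq> X" using c d by auto
    ultimately show ?thesis using psd by metis
  qed
  then have "(kip k d c)\<^sup>2 \<le> kip k c c * kip k d d"
    using psd[OF d] by (rule quadratic_nonneg_imp_discriminant_le)
  then have "sqrt ((kip k d c)\<^sup>2) \<le> sqrt (kip k c c * kip k d d)" by (rule real_sqrt_le_mono)
  then show ?thesis by (simp add: knorm_def real_sqrt_mult)
qed

lemma rkhs_eval_comb_bound:
  assumes pd: "pd_kernel X k" and f: "in_rkhs_norm_le X k f B" and d: "set (map snd d) \<subseteq> X"
  shows "\<bar>\<Sum>(a, z)\<leftarrow>d. a * f z\<bar> \<le> B * knorm k d"
proof -
  obtain cs :: "nat \<Rightarrow> (real \<times> 'a) list" and L where
    cs: "\<And>m. set (map snd (cs m)) \<subseteq> X" and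
    lim: "\<And>y. y \<in> X \<Longrightarrow> (\<lambda>m. kcomb k (cs m) y) \<longlonglongrightarrow> f y" and
    L: "(\<lambda>m. knorm k (cs m)) \<longlonglongrightarrow> L" "L \<le> B"
    using f unfolding in_rkhs_norm_le_def by blast
  have "(\<lambda>m. kip k d (cs m)) \<longlonglongrightarrow> (\<Sum>(a, z)\<leftarrow>d. a * f z)"
    unfolding kip_eq_sum_kcomb case_prod_unfold using d
    by (induction d) (auto intro!: tendsto_add tendsto_mult lim)
  then have "\<bar>\<Sum>(a, z)\<leftarrow>d. a * f z\<bar> \<le> L * knorm k d"
    using kip_Cauchy_Schwarz[OF pd cs d]
    by (intro tendsto_le[OF _ tendsto_mult[OF L(1) tendsto_const] tendsto_rabs]) auto
  also have "\<dots> \<le> B * knorm k d"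
    using L(2) pd d by (intro mult_right_mono) (auto simp: knorm_def pd_kernel_def)
  finally show ?thesis .
qed

section \<open>Kernel ridge regression\<close>

definition univ_list :: "'n::finite list" where
  "univ_list = (SOME l. set l = UNIV \<and> distinct l)"

lemma distinct_univ_list: "distinct univ_list" and set_univ_list: "set univ_list = UNIV"
  using someI_ex[OF finite_distinct_list[OF finite_class.finite_UNIV]] by (auto simp: univ_list_def)

lemma sum_list_univ_list: "(\<Sum>i\<leftarrow>univ_list. g i) = (\<Sum>i\<in>UNIV. g i)"
  using sum_list_distinct_conv_sum_set[OF distinct_univ_list] by (simp add: set_univ_list)

definition vec_comb :: "real^'n \<Rightarrow> ('n::finite \<Rightarrow> 'a) \<Rightarrow> (real \<times> 'a) list" where
  "vec_comb v \<xi> = map (\<lambda>i. (v $ i, \<xi> i)) univ_list"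

lemma set_vec_comb: "(\<And>i. \<xi> i \<in> X) \<Longrightarrow> set (map snd (vec_comb v \<xi>)) \<subseteq> X"
  by (auto simp: vec_comb_def)

lemma sum_list_vec_comb: "(\<Sum>(a, z)\<leftarrow>vec_comb v \<xi>. a * g z) = v \<bullet> (\<chi> i. g (\<xi> i))"
  by (simp add: vec_comb_def o_def sum_list_univ_list inner_vec_def)

lemma kcomb_vec_comb: "kcomb k (vec_comb v \<xi>) y = v \<bullet> kvec k y \<xi>"
  unfolding kcomb_def sum_list_vec_comb kvec_def ..

lemma kip_vec_comb: "kip k (vec_comb v \<xi>) (vec_comb w \<xi>) = v \<bullet> (gram k \<xi> *v w)"
  unfolding kip_eq_sum_kcomb sum_list_vec_comb kcomb_vec_comb
  by (simp add: inner_vec_def kvec_def gram_def matrix_vector_mult_def mult.commute)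

lemma gram_psd:
  assumes "pd_kernel X k" "\<And>i. \<xi> i \<in> X"
  shows "0 \<le> v \<bullet> (gram k \<xi> *v v)"
  using assms set_vec_comb[of \<xi> X v] by (auto simp: pd_kernel_def simp flip: kip_vec_comb)

lemma mat_mult_vector: "mat c *v v = c *s (v :: 'a::comm_semiring_1^'n)"
  by (simp add: vec_eq_iff matrix_vector_mult_def mat_def if_distrib if_distribR cong: if_cong)

lemma invertible_psd_plus_mat:
  fixes A :: "real^'n^'n"
  assumes psd: "\<And>v. 0 \<le> v \<bullet> (A *v v)" and "c > 0"
  shows "invertible (A + mat c)"
  unfolding invertible_left_inverse matrix_left_invertible_ker
proof (intro allI impI)
  fix v assume "(A + mat c) *v v = 0"
  then have "v \<bullet> (A *v v + c *s v) = 0"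
    by (simp add: matrix_vector_mult_add_rdistrib mat_mult_vector)
  then have "v \<bullet> (A *v v) + c * (v \<bullet> v) = 0"
    by (simp add: inner_add_right scalar_mult_eq_scaleR)
  with psd[of v] \<open>c > 0\<close> have "v \<bullet> v = 0"
    by (smt (verit) inner_ge_zero mult_pos_pos)
  then show "v = 0" by simp
qed

lemma matrix_inv_right: "invertible A \<Longrightarrow> A ** matrix_inv A = mat 1"
  unfolding invertible_def matrix_inv_def by (metis (mono_tags, lifting) someI_ex)

definition cramer_solve :: "'a::field^'n^'n \<Rightarrow> 'a^'n \<Rightarrow> 'a^'n" where
  "cramer_solve A b = (\<chi> j. det (\<chi> i j'. if j' = j then b $ i else A $ i $ j') / det A)"

lemma matrix_inv_mult_eq_cramer_solve:
  fixes A :: "'a::field^'n^'n"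
  assumes "invertible A"
  shows "matrix_inv A *v b = cramer_solve A b"
proof -
  have "A *v (matrix_inv A *v b) = b"
    using assms by (simp add: matrix_vector_mul_assoc matrix_inv_right)
  moreover have "det A \<noteq> 0" using assms by (simp add: invertible_det_nz)
  ultimately show ?thesis
    using cramer[of A "matrix_inv A *v b" b] unfolding cramer_solve_def by blast
qed

text \<open>The weights are defined by Cramer's rule rather than by \<^const>\<open>matrix_inv\<close> so that
  they depend measurably on the design points everywhere, not only where the regularised
  Gram matrix is invertible.\<close>

definition krr_weights :: "('a \<Rightarrow> 'a \<Rightarrow> real) \<Rightarrow> real \<Rightarrow> 'a \<Rightarrow> ('n::finite \<Rightarrow> 'a) \<Rightarrow> real^'n" where
  "krr_weights k lam x \<xi> = cramer_solve (gram k \<xi> + mat (lam\<^sup>2)) (kvec k x \<xi>)"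

definition krr_residual :: "('a \<Rightarrow> 'a \<Rightarrow> real) \<Rightarrow> real \<Rightarrow> 'a \<Rightarrow> ('n::finite \<Rightarrow> 'a) \<Rightarrow> (real \<times> 'a) list" where
  "krr_residual k lam x \<xi> = (1, x) # vec_comb (- krr_weights k lam x \<xi>) \<xi>"

context
  fixes X :: "'a set" and k :: "'a \<Rightarrow> 'a \<Rightarrow> real" and lam :: real and \<xi> :: "'n::finite \<Rightarrow> 'a"
  assumes pd: "pd_kernel X k" and design: "\<And>i. \<xi> i \<in> X" and lam: "lam > 0"
begin

lemma invertible_regularized_gram: "invertible (gram k \<xi> + mat (lam\<^sup>2))"
  using gram_psd[OF pd design] lam by (intro invertible_psd_plus_mat) auto

lemma krr_weights_eq: "krr_weights k lam x \<xi> = matrix_inv (gram k \<xi> + mat (lam\<^sup>2)) *v kvec k x \<xi>"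
  by (simp add: krr_weights_def matrix_inv_mult_eq_cramer_solve[OF invertible_regularized_gram])

lemma regularized_gram_mult_krr_weights:
  "gram k \<xi> *v krr_weights k lam x \<xi> + lam\<^sup>2 *s krr_weights k lam x \<xi> = kvec k x \<xi>"
proof -
  have "(gram k \<xi> + mat (lam\<^sup>2)) *v krr_weights k lam x \<xi> = kvec k x \<xi>"
    using invertible_regularized_gram
    by (simp add: krr_weights_eq matrix_vector_mul_assoc matrix_inv_right)
  then show ?thesis by (simp add: matrix_vector_mult_add_rdistrib mat_mult_vector)
qed

lemma regularized_gram_symmetric: "transpose (gram k \<xi> + mat c) = gram k \<xi> + mat c"
  using pd design by (auto simp: pd_kernel_def gram_def transpose_def mat_def vec_eq_iff)

lemma post_mean_eq_krr_weights: "post_mean k lam \<xi> Y x = krr_weights k lam x \<xi> \<bullet> Y"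
proof -
  let ?A = "gram k \<xi> + mat (lam\<^sup>2)" and ?w = "krr_weights k lam x \<xi>"
  have "kvec k x \<xi> = ?w v* ?A"
    using regularized_gram_mult_krr_weights regularized_gram_symmetric[of "lam\<^sup>2"]
      transpose_matrix_vector[of ?A ?w]
    by (simp add: matrix_vector_mult_add_rdistrib mat_mult_vector)
  then have "kvec k x \<xi> \<bullet> (matrix_inv ?A *v Y) = ?w \<bullet> (?A *v (matrix_inv ?A *v Y))"
    by (simp add: dot_lmul_matrix)
  also have "\<dots> = ?w \<bullet> Y"
    using invertible_regularized_gram by (simp add: matrix_vector_mul_assoc matrix_inv_right)
  finally show ?thesis by (simp add: post_mean_def)
qed

lemma post_var_eq_krr_weights: "post_var k lam \<xi> x = k x x - krr_weights k lam x \<xi> \<bullet> kvec k x \<xi>"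
  using post_mean_eq_krr_weights[of "kvec k x \<xi>" x] by (simp add: post_var_def post_mean_def)

lemma sum_list_krr_residual:
  "(\<Sum>(a, z)\<leftarrow>krr_residual k lam x \<xi>. a * g z) = g x - krr_weights k lam x \<xi> \<bullet> (\<chi> i. g (\<xi> i))"
  by (simp add: krr_residual_def sum_list_vec_comb)

lemma post_var_eq_residual:
  assumes "x \<in> X"
  shows "post_var k lam \<xi> x
    = kip k (krr_residual k lam x \<xi>) (krr_residual k lam x \<xi>) + lam\<^sup>2 * (krr_weights k lam x \<xi> \<bullet> krr_weights k lam x \<xi>)"
proof -
  let ?r = "krr_residual k lam x \<xi>" and ?w = "krr_weights k lam x \<xi>" and ?kv = "kvec k x \<xi>"
  have kcomb_residual: "kcomb k ?r y = k y x - ?w \<bullet> kvec k y \<xi>" for y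
    unfolding kcomb_def sum_list_krr_residual kvec_def ..
  have "(\<chi> i. kcomb k ?r (\<xi> i)) = ?kv - gram k \<xi> *v ?w"
    using pd design assms
    by (auto simp: vec_eq_iff kcomb_residual pd_kernel_def kvec_def gram_def
        matrix_vector_mult_def inner_vec_def mult.commute)
  then have "kip k ?r ?r = k x x - 2 * (?w \<bullet> ?kv) + ?w \<bullet> (gram k \<xi> *v ?w)"
    unfolding kip_eq_sum_kcomb sum_list_krr_residual kcomb_residual
    by (simp add: kvec_def inner_diff_right)
  moreover have "?w \<bullet> ?kv = ?w \<bullet> (gram k \<xi> *v ?w) + lam\<^sup>2 * (?w \<bullet> ?w)"
    by (simp flip: regularized_gram_mult_krr_weights
        add: inner_add_right scalar_mult_eq_scaleR)
  ultimately show ?thesis by (simp add: post_var_eq_krr_weights)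
qed

lemma krr_bias_bound:
  assumes "in_rkhs_norm_le X k f B" "x \<in> X"
  shows "\<bar>f x - krr_weights k lam x \<xi> \<bullet> (\<chi> i. f (\<xi> i))\<bar> \<le> B * knorm k (krr_residual k lam x \<xi>)"
proof -
  have "set (map snd (krr_residual k lam x \<xi>)) \<subseteq> X"
    using set_vec_comb[OF design] assms(2) by (simp add: krr_residual_def)
  from rkhs_eval_comb_bound[OF pd assms(1) this] show ?thesis
    unfolding sum_list_krr_residual .
qed

end

section \<open>Measurability\<close>

lemma borel_measurable_det:
  fixes A :: "'w \<Rightarrow> real^'n::finite^'n"
  assumes "\<And>i j. (\<lambda>\<omega>. A \<omega> $ i $ j) \<in> borel_measurable N"
  shows "(\<lambda>\<omega>. det (A \<omega>)) \<in> borel_measurable N"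
  unfolding det_def
  by (intro borel_measurable_sum borel_measurable_times borel_measurable_prod borel_measurable_const assms)

lemma borel_measurable_cramer_solve:
  fixes A :: "'w \<Rightarrow> real^'n::finite^'n" and b :: "'w \<Rightarrow> real^'n"
  assumes A: "\<And>i j. (\<lambda>\<omega>. A \<omega> $ i $ j) \<in> borel_measurable N"
    and b: "\<And>i. (\<lambda>\<omega>. b \<omega> $ i) \<in> borel_measurable N"
  shows "(\<lambda>\<omega>. cramer_solve (A \<omega>) (b \<omega>) $ j) \<in> borel_measurable N"
proof -
  have entries: "(\<lambda>\<omega>. (\<chi> i j'. if j' = j then b \<omega> $ i else A \<omega> $ i $ j') $ i $ j') \<in> borel_measurable N"
    for i j'
    by (cases "j' = j") (simp_all add: A b)
  have "(\<lambda>\<omega>. det (\<chi> i j'. if j' = j then b \<omega> $ i else A \<omega> $ i $ j') / det (A \<omega>)) \<in> borel_measurable N"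
    by (intro borel_measurable_divide borel_measurable_det entries A)
  then show ?thesis by (simp add: cramer_solve_def)
qed

lemma borel_measurable_kernel_comp:
  fixes k :: "'a::second_countable_topology \<Rightarrow> 'a \<Rightarrow> real"
  assumes k: "(\<lambda>(u, v). k u v) \<in> borel_measurable borel"
    and p: "p \<in> borel_measurable N" and q: "q \<in> borel_measurable N"
  shows "(\<lambda>\<omega>. k (p \<omega>) (q \<omega>)) \<in> borel_measurable N"
proof -
  have "(\<lambda>\<omega>. (p \<omega>, q \<omega>)) \<in> measurable N borel"
    using measurable_Pair[OF p q] by (simp add: borel_prod)
  from measurable_compose[OF this k] show ?thesis by simp
qed

lemma borel_measurable_krr_weights:
  fixes k :: "'a::second_countable_topology \<Rightarrow> 'a \<Rightarrow> real" and \<xi> :: "'w \<Rightarrow> 'n::finite \<Rightarrow> 'a"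
  assumes k: "(\<lambda>(u, v). k u v) \<in> borel_measurable borel"
    and \<xi>: "\<And>i. (\<lambda>\<omega>. \<xi> \<omega> i) \<in> borel_measurable N"
  shows "(\<lambda>\<omega>. krr_weights k lam x (\<xi> \<omega>) $ j) \<in> borel_measurable N"
  unfolding krr_weights_def
  by (intro borel_measurable_cramer_solve)
    (auto simp: gram_def kvec_def mat_def intro!: borel_measurable_add borel_measurable_kernel_comp[OF k] \<xi>)

lemma borel_measurable_kcomb_comp:
  fixes k :: "'a::second_countable_topology \<Rightarrow> 'a \<Rightarrow> real"
  assumes k: "(\<lambda>(u, v). k u v) \<in> borel_measurable borel" and p: "p \<in> borel_measurable N"
  shows "(\<lambda>\<omega>. kcomb k c (p \<omega>)) \<in> borel_measurable N"
proof (induction c)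
  case Nil
  show ?case by (simp add: kcomb_def)
next
  case (Cons e c)
  have "(\<lambda>\<omega>. fst e * k (p \<omega>) (snd e) + kcomb k c (p \<omega>)) \<in> borel_measurable N"
    by (intro borel_measurable_add borel_measurable_times borel_measurable_const Cons.IH
        borel_measurable_kernel_comp[OF k p measurable_const]) simp
  then show ?case by (simp add: kcomb_def case_prod_unfold)
qed

lemma borel_measurable_rkhs_comp:
  fixes k :: "'a::second_countable_topology \<Rightarrow> 'a \<Rightarrow> real"
  assumes k: "(\<lambda>(u, v). k u v) \<in> borel_measurable borel" and f: "in_rkhs_norm_le X k f B"
    and p: "p \<in> borel_measurable N" and pX: "\<And>\<omega>. \<omega> \<in> space N \<Longrightarrow> p \<omega> \<in> X"
  shows "(\<lambda>\<omega>. f (p \<omega>)) \<in> borel_measurable N"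
proof -
  obtain cs :: "nat \<Rightarrow> (real \<times> 'a) list" where
    lim: "\<And>y. y \<in> X \<Longrightarrow> (\<lambda>m. kcomb k (cs m) y) \<longlonglongrightarrow> f y"
    using f unfolding in_rkhs_norm_le_def by blast
  show ?thesis
  proof (rule borel_measurable_LIMSEQ_real)
    show "(\<lambda>m. kcomb k (cs m) (p \<omega>)) \<longlonglongrightarrow> f (p \<omega>)" if "\<omega> \<in> space N" for \<omega>
      using lim pX that by blast
    show "(\<lambda>\<omega>. kcomb k (cs m) (p \<omega>)) \<in> borel_measurable N" for m
      by (rule borel_measurable_kcomb_comp[OF k p])
  qed
qed

section \<open>Sub-Gaussian tails given an independent design\<close>

lemma (in prob_space) subgaussian_sum_tail:
  fixes eps :: "'i \<Rightarrow> 'a \<Rightarrow> real" and a :: "'i \<Rightarrow> real"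
  assumes "finite I" and indep: "indep_vars (\<lambda>_. borel) eps I"
    and subg: "\<And>i h. i \<in> I \<Longrightarrow> integrable M (\<lambda>\<omega>. exp (h * eps i \<omega>)) \<and>
                 expectation (\<lambda>\<omega>. exp (h * eps i \<omega>)) \<le> exp (h\<^sup>2 * R\<^sup>2 / 2)"
    and "R > 0" and "(\<Sum>i\<in>I. (a i)\<^sup>2) > 0" and "t \<ge> 0"
  shows "prob {\<omega> \<in> space M. t < (\<Sum>i\<in>I. a i * eps i \<omega>)} \<le> exp (- t\<^sup>2 / (2 * R\<^sup>2 * (\<Sum>i\<in>I. (a i)\<^sup>2)))"
proof -
  define S where "S = (\<Sum>i\<in>I. (a i)\<^sup>2)"
  define h where "h = t / (R\<^sup>2 * S)"
  define Z where "Z \<omega> = (\<Sum>i\<in>I. a i * eps i \<omega>)" for \<omega>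
  have "S > 0" "h \<ge> 0" using assms by (simp_all add: S_def h_def)
  have [measurable]: "eps i \<in> borel_measurable M" if "i \<in> I" for i
    using indep that by (simp add: indep_vars_def)
  have indep_exp: "indep_vars (\<lambda>_. borel) (\<lambda>i \<omega>. exp (h * a i * eps i \<omega>)) I"
    by (rule indep_vars_compose2[OF indep]) auto
  have int: "\<And>i. i \<in> I \<Longrightarrow> integrable M (\<lambda>\<omega>. exp (h * a i * eps i \<omega>))"
    using subg by auto
  have exp_Z: "exp (h * Z \<omega>) = (\<Prod>i\<in>I. exp (h * a i * eps i \<omega>))" for \<omega>
    using \<open>finite I\<close> by (simp add: Z_def exp_sum sum_distrib_left mult.assoc)
  have "integrable M (\<lambda>\<omega>. exp (h * Z \<omega>))"
    unfolding exp_Z using \<open>finite I\<close> int by (intro indep_vars_integrable[OF _ indep_exp]) auto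
  have "expectation (\<lambda>\<omega>. exp (h * Z \<omega>)) = (\<Prod>i\<in>I. expectation (\<lambda>\<omega>. exp (h * a i * eps i \<omega>)))"
    unfolding exp_Z using \<open>finite I\<close> int by (intro indep_vars_lebesgue_integral[OF _ indep_exp]) auto
  also have "\<dots> \<le> (\<Prod>i\<in>I. exp ((h * a i)\<^sup>2 * R\<^sup>2 / 2))"
    using subg by (intro prod_mono) (auto intro!: integral_nonneg_AE)
  also have "\<dots> = exp (h\<^sup>2 * R\<^sup>2 * S / 2)"
    using \<open>finite I\<close>
    by (simp add: S_def exp_sum sum_divide_distrib sum_distrib_left power_mult_distrib algebra_simps)
  finally have mgf: "expectation (\<lambda>\<omega>. exp (h * Z \<omega>)) \<le> exp (h\<^sup>2 * R\<^sup>2 * S / 2)" .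
  have "prob {\<omega> \<in> space M. t < Z \<omega>} \<le> prob {\<omega> \<in> space M. exp (h * t) \<le> exp (h * Z \<omega>)}"
    using \<open>h \<ge> 0\<close> by (intro finite_measure_mono) (auto simp: Z_def mult_left_mono)
  also have "\<dots> \<le> expectation (\<lambda>\<omega>. exp (h * Z \<omega>)) / exp (h * t)"
    by (rule integral_Markov_inequality_measure[OF \<open>integrable M _\<close>]) (auto simp: Z_def)
  also have "\<dots> \<le> exp (h\<^sup>2 * R\<^sup>2 * S / 2 - h * t)"
    using mgf by (simp add: exp_diff divide_right_mono)
  also have "h\<^sup>2 * R\<^sup>2 * S / 2 - h * t = - t\<^sup>2 / (2 * R\<^sup>2 * S)"
    using \<open>S > 0\<close> \<open>R > 0\<close> by (simp add: h_def field_simps power2_eq_square)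
  finally show ?thesis by (simp add: Z_def S_def)
qed

lemma (in prob_space) subgaussian_sum_tail_log:
  fixes eps :: "'i \<Rightarrow> 'a \<Rightarrow> real" and a :: "'i \<Rightarrow> real"
  assumes "finite I" and indep: "indep_vars (\<lambda>_. borel) eps I"
    and subg: "\<And>i h. i \<in> I \<Longrightarrow> integrable M (\<lambda>\<omega>. exp (h * eps i \<omega>)) \<and>
                 expectation (\<lambda>\<omega>. exp (h * eps i \<omega>)) \<le> exp (h\<^sup>2 * R\<^sup>2 / 2)"
    and "R > 0" and "0 < \<delta>" "\<delta> \<le> 1"
  shows "prob {\<omega> \<in> space M. R * sqrt (\<Sum>i\<in>I. (a i)\<^sup>2) * sqrt (2 * ln (1 / \<delta>))
                               < (\<Sum>i\<in>I. a i * eps i \<omega>)} \<le> \<delta>"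
proof (cases "(\<Sum>i\<in>I. (a i)\<^sup>2) > 0")
  case True
  define S where "S = (\<Sum>i\<in>I. (a i)\<^sup>2)"
  define t where "t = R * sqrt S * sqrt (2 * ln (1 / \<delta>))"
  have "ln (1 / \<delta>) \<ge> 0" using assms by simp
  then have "t \<ge> 0" "- t\<^sup>2 / (2 * R\<^sup>2 * S) = - ln (1 / \<delta>)"
    using True \<open>R > 0\<close> by (simp_all add: t_def S_def power_mult_distrib)
  moreover have "exp (- ln (1 / \<delta>)) = \<delta>" using \<open>0 < \<delta>\<close> by (simp add: ln_div)
  ultimately show ?thesis
    using subgaussian_sum_tail[OF assms(1-4) True, of t] by (simp add: t_def S_def)
next
  case False
  then have "(\<Sum>i\<in>I. (a i)\<^sup>2) = 0" by (intro antisym) (simp_all add: not_less sum_nonneg)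
  then have "\<forall>i\<in>I. a i = 0" using \<open>finite I\<close> by (simp add: sum_nonneg_eq_0_iff)
  then show ?thesis using \<open>0 < \<delta>\<close> by simp
qed

lemma (in prob_space) indep_rvs_joint_distr:
  assumes "indep_rvs S X T Y"
  shows "distr M (S \<Otimes>\<^sub>M T) (\<lambda>\<omega>. (X \<omega>, Y \<omega>)) = distr M S X \<Otimes>\<^sub>M distr M T Y"
proof -
  have X: "random_variable S X" and Y: "random_variable T Y"
    and ind: "indep_set {X -` A \<inter> space M | A. A \<in> sets S} {Y -` A \<inter> space M | A. A \<in> sets T}"
    using assms by (auto simp: indep_rvs_def)
  interpret PX: prob_space "distr M S X" by (rule prob_space_distr[OF X])
  interpret PY: prob_space "distr M T Y" by (rule prob_space_distr[OF Y])
  show ?thesis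
  proof (rule pair_measure_eqI[symmetric])
    fix A B assume A: "A \<in> sets (distr M S X)" and B: "B \<in> sets (distr M T Y)"
    have "(\<lambda>\<omega>. (X \<omega>, Y \<omega>)) -` (A \<times> B) \<inter> space M = (X -` A \<inter> space M) \<inter> (Y -` B \<inter> space M)"
      by auto
    moreover have "prob ((X -` A \<inter> space M) \<inter> (Y -` B \<inter> space M))
        = prob (X -` A \<inter> space M) * prob (Y -` B \<inter> space M)"
      using indep_setD[OF ind, of "X -` A \<inter> space M" "Y -` B \<inter> space M"] A B by auto
    ultimately show "emeasure (distr M S X) A * emeasure (distr M T Y) B
        = emeasure (distr M (S \<Otimes>\<^sub>M T) (\<lambda>\<omega>. (X \<omega>, Y \<omega>))) (A \<times> B)"
      using X Y A B
      by (simp add: emeasure_distr measurable_Pair emeasure_eq_measure ennreal_mult)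
  qed (simp_all add: PX.sigma_finite_measure PY.sigma_finite_measure)
qed

lemma (in prob_space) prob_indep_rvs_le:
  assumes XY: "indep_rvs S X T Y"
    and Q: "{p \<in> space (S \<Otimes>\<^sub>M T). Q (fst p) (snd p)} \<in> sets (S \<Otimes>\<^sub>M T)"
    and section_le: "\<And>\<xi>. \<xi> \<in> space S \<Longrightarrow> prob {\<omega> \<in> space M. Q \<xi> (Y \<omega>)} \<le> \<delta>"
  shows "prob {\<omega> \<in> space M. Q (X \<omega>) (Y \<omega>)} \<le> \<delta>"
proof -
  let ?Q = "{p \<in> space (S \<Otimes>\<^sub>M T). Q (fst p) (snd p)}"
  have X: "random_variable S X" and Y: "random_variable T Y"
    using XY by (auto simp: indep_rvs_def)
  interpret PX: prob_space "distr M S X" by (rule prob_space_distr[OF X])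
  interpret PY: prob_space "distr M T Y" by (rule prob_space_distr[OF Y])
  obtain \<omega>0 where "\<omega>0 \<in> space M" using not_empty by blast
  then have "0 \<le> \<delta>"
    using section_le[OF measurable_space[OF X]] measure_nonneg order_trans by blast
  have "emeasure M {\<omega> \<in> space M. Q (X \<omega>) (Y \<omega>)} = emeasure M ((\<lambda>\<omega>. (X \<omega>, Y \<omega>)) -` ?Q \<inter> space M)"
    using measurable_space[OF X] measurable_space[OF Y]
    by (intro arg_cong[where f = "emeasure M"]) (auto simp: space_pair_measure)
  also have "\<dots> = emeasure (distr M S X \<Otimes>\<^sub>M distr M T Y) ?Q"
    using Q X Y by (simp add: emeasure_distr measurable_Pair flip: indep_rvs_joint_distr[OF XY])
  also have "\<dots> = (\<integral>\<^sup>+\<xi>. emeasure (distr M T Y) (Pair \<xi> -` ?Q) \<partial>distr M S X)"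
    using Q by (intro PY.emeasure_pair_measure_alt) simp
  also have "\<dots> \<le> (\<integral>\<^sup>+\<xi>. ennreal \<delta> \<partial>distr M S X)"
  proof (rule nn_integral_mono)
    fix \<xi> assume "\<xi> \<in> space (distr M S X)"
    then have "Y -` (Pair \<xi> -` ?Q) \<inter> space M = {\<omega> \<in> space M. Q \<xi> (Y \<omega>)}"
      using measurable_space[OF Y] by (auto simp: space_pair_measure)
    moreover have "Pair \<xi> -` ?Q \<in> sets T" using Q by (rule sets_Pair1)
    ultimately show "emeasure (distr M T Y) (Pair \<xi> -` ?Q) \<le> ennreal \<delta>"
      using section_le[of \<xi>] \<open>\<xi> \<in> space _\<close> Y
      by (simp add: emeasure_distr emeasure_eq_measure ennreal_leI)
  qed
  also have "\<dots> = ennreal \<delta>" using PX.emeasure_space_1 by simp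
  finally show ?thesis using \<open>0 \<le> \<delta>\<close> by (simp add: emeasure_eq_measure)
qed

lemma (in prob_space) subgaussian_design_weighted_tail:
  fixes xs :: "'n::finite \<Rightarrow> 'a \<Rightarrow> 'b::topological_space" and eps :: "'n \<Rightarrow> 'a \<Rightarrow> real"
    and g :: "('n \<Rightarrow> 'b) \<Rightarrow> 'n \<Rightarrow> real"
  assumes XE: "indep_rvs (Pi\<^sub>M UNIV (\<lambda>_. borel)) (\<lambda>\<omega> i. xs i \<omega>) (Pi\<^sub>M UNIV (\<lambda>_. borel)) (\<lambda>\<omega> i. eps i \<omega>)"
    and indep: "indep_vars (\<lambda>_. borel) eps UNIV"
    and subg: "\<And>i h. integrable M (\<lambda>\<omega>. exp (h * eps i \<omega>)) \<and>
                 expectation (\<lambda>\<omega>. exp (h * eps i \<omega>)) \<le> exp (h\<^sup>2 * R\<^sup>2 / 2)"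
    and "R > 0" "0 < \<delta>" "\<delta> \<le> 1"
    and g: "\<And>i. (\<lambda>\<xi>. g \<xi> i) \<in> borel_measurable (Pi\<^sub>M UNIV (\<lambda>_. borel))"
  shows "prob {\<omega> \<in> space M. R * sqrt (\<Sum>i\<in>UNIV. (g (\<lambda>i. xs i \<omega>) i)\<^sup>2) * sqrt (2 * ln (1 / \<delta>))
                               < (\<Sum>i\<in>UNIV. g (\<lambda>i. xs i \<omega>) i * eps i \<omega>)} \<le> \<delta>"
proof (rule prob_indep_rvs_le[OF XE, where Q = "\<lambda>\<xi> e. R * sqrt (\<Sum>i\<in>UNIV. (g \<xi> i)\<^sup>2) * sqrt (2 * ln (1 / \<delta>))
                                               < (\<Sum>i\<in>UNIV. g \<xi> i * e i)"])
  have [measurable]: "(\<lambda>p. g (fst p) i) \<in> borel_measurable (Pi\<^sub>M UNIV (\<lambda>_. borel) \<Otimes>\<^sub>M Pi\<^sub>M UNIV (\<lambda>_. borel))"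
    for i
    by (rule measurable_compose[OF measurable_fst g])
  show "{p \<in> space (Pi\<^sub>M UNIV (\<lambda>_. borel) \<Otimes>\<^sub>M Pi\<^sub>M UNIV (\<lambda>_. borel)).
          R * sqrt (\<Sum>i\<in>UNIV. (g (fst p) i)\<^sup>2) * sqrt (2 * ln (1 / \<delta>)) < (\<Sum>i\<in>UNIV. g (fst p) i * snd p i)}
        \<in> sets (Pi\<^sub>M UNIV (\<lambda>_. borel) \<Otimes>\<^sub>M (Pi\<^sub>M UNIV (\<lambda>_. borel) :: ('n \<Rightarrow> real) measure))"
    by measurable
  fix \<xi>
  show "prob {\<omega> \<in> space M. R * sqrt (\<Sum>i\<in>UNIV. (g \<xi> i)\<^sup>2) * sqrt (2 * ln (1 / \<delta>))
                               < (\<Sum>i\<in>UNIV. g \<xi> i * eps i \<omega>)} \<le> \<delta>"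
    by (rule subgaussian_sum_tail_log[OF finite_class.finite_UNIV indep]) (use subg assms in auto)
qed

section \<open>Confidence bounds\<close>

lemma krr_confidence_pointwise:
  fixes \<xi> :: "'n::finite \<Rightarrow> 'a" and e :: "'n \<Rightarrow> real"
  assumes pd: "pd_kernel X k" and f: "in_rkhs_norm_le X k f B"
    and design: "\<And>i. \<xi> i \<in> X" and x: "x \<in> X"
    and "lam > 0" "B \<ge> 0" "R \<ge> 0" "s \<ge> 0" "\<bar>c\<bar> = 1"
    and noise: "- c * (krr_weights k lam x \<xi> \<bullet> (\<chi> i. e i)) \<le> R * norm (krr_weights k lam x \<xi>) * s"
  shows "c * (f x - post_mean k lam \<xi> (\<chi> i. f (\<xi> i) + e i) x)
           \<le> (B + R / lam * s) * sqrt (post_var k lam \<xi> x)"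
proof -
  let ?w = "krr_weights k lam x \<xi>" and ?r = "krr_residual k lam x \<xi>"
  let ?F = "\<chi> i. f (\<xi> i)" and ?E = "\<chi> i. e i" and ?pv = "post_var k lam \<xi> x"
  have "(\<chi> i. f (\<xi> i) + e i) = ?F + ?E" by (simp add: vec_eq_iff)
  then have mean: "post_mean k lam \<xi> (\<chi> i. f (\<xi> i) + e i) x = ?w \<bullet> ?F + ?w \<bullet> ?E"
    using post_mean_eq_krr_weights[where \<xi> = \<xi> and Y = "?F + ?E", OF pd design \<open>lam > 0\<close>]
    by (simp only: inner_add_right)
  have var: "?pv = kip k ?r ?r + lam\<^sup>2 * (?w \<bullet> ?w)"
    by (rule post_var_eq_residual[where \<xi> = \<xi>, OF pd design \<open>lam > 0\<close> x])
  have "set (map snd ?r) \<subseteq> X"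
    using set_vec_comb[OF design] x by (simp add: krr_residual_def)
  then have "kip k ?r ?r \<ge> 0" using pd by (simp add: pd_kernel_def)
  have "c * (f x - ?w \<bullet> ?F) \<le> \<bar>f x - ?w \<bullet> ?F\<bar>"
    using abs_ge_self[of "c * (f x - ?w \<bullet> ?F)"] \<open>\<bar>c\<bar> = 1\<close> by (simp add: abs_mult)
  also have "\<dots> \<le> B * sqrt (kip k ?r ?r)"
    using krr_bias_bound[where \<xi> = \<xi>, OF pd design \<open>lam > 0\<close> f x] by (simp add: knorm_def)
  also have "\<dots> \<le> B * sqrt ?pv"
    using var \<open>B \<ge> 0\<close> \<open>lam > 0\<close> by (intro mult_left_mono) auto
  finally have bias: "c * (f x - ?w \<bullet> ?F) \<le> B * sqrt ?pv" .
  have "lam * norm ?w = sqrt (lam\<^sup>2 * (?w \<bullet> ?w))"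
    using \<open>lam > 0\<close> by (simp add: real_sqrt_mult norm_eq_sqrt_inner)
  also have "\<dots> \<le> sqrt ?pv" using var \<open>kip k ?r ?r \<ge> 0\<close> by simp
  finally have "R / lam * s * (lam * norm ?w) \<le> R / lam * s * sqrt ?pv"
    using assms(5-8) by (intro mult_left_mono) auto
  moreover have "R / lam * s * (lam * norm ?w) = R * norm ?w * s" using \<open>lam > 0\<close> by simp
  ultimately have "- c * (?w \<bullet> ?E) \<le> R / lam * s * sqrt ?pv" using noise by linarith
  with bias show ?thesis unfolding mean by (simp add: algebra_simps)
qed

lemma (in prob_space) krr_one_sided_confidence:
  fixes X :: "'b::second_countable_topology set" and xs :: "'n::finite \<Rightarrow> 'a \<Rightarrow> 'b"
    and eps :: "'n \<Rightarrow> 'a \<Rightarrow> real"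
  assumes pd: "pd_kernel X k" and k_meas: "(\<lambda>(u, v). k u v) \<in> borel_measurable borel"
    and f: "in_rkhs_norm_le X k f B" and "B \<ge> 0" "lam > 0" "R > 0"
    and xs_in: "\<And>i \<omega>. \<omega> \<in> space M \<Longrightarrow> xs i \<omega> \<in> X"
    and eps_indep: "indep_vars (\<lambda>_. borel) eps UNIV"
    and eps_subg: "\<And>i h. integrable M (\<lambda>\<omega>. exp (h * eps i \<omega>)) \<and>
                     expectation (\<lambda>\<omega>. exp (h * eps i \<omega>)) \<le> exp (h\<^sup>2 * R\<^sup>2 / 2)"
    and XE: "indep_rvs (Pi\<^sub>M UNIV (\<lambda>_. borel)) (\<lambda>\<omega> i. xs i \<omega>) (Pi\<^sub>M UNIV (\<lambda>_. borel)) (\<lambda>\<omega> i. eps i \<omega>)"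
    and x: "x \<in> X" and "0 < \<delta>" "\<delta> \<le> 1" and "\<bar>c\<bar> = 1"
  shows "prob {\<omega> \<in> space M.
           c * (f x - post_mean k lam (\<lambda>i. xs i \<omega>) (\<chi> i. f (xs i \<omega>) + eps i \<omega>) x)
             \<le> (B + R / lam * sqrt (2 * ln (1 / \<delta>))) * sqrt (post_var k lam (\<lambda>i. xs i \<omega>) x)}
         \<ge> 1 - \<delta>"
proof -
  define s where "s = sqrt (2 * ln (1 / \<delta>))"
  define w where "w \<omega> = krr_weights k lam x (\<lambda>i. xs i \<omega>)" for \<omega>
  define G where "G = {\<omega> \<in> space M.
           c * (f x - post_mean k lam (\<lambda>i. xs i \<omega>) (\<chi> i. f (xs i \<omega>) + eps i \<omega>) x)
             \<le> (B + R / lam * s) * sqrt (post_var k lam (\<lambda>i. xs i \<omega>) x)}"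
  define Bad where "Bad = {\<omega> \<in> space M.
           R * sqrt (\<Sum>i\<in>UNIV. (- c * w \<omega> $ i)\<^sup>2) * s < (\<Sum>i\<in>UNIV. - c * w \<omega> $ i * eps i \<omega>)}"
  have [measurable]: "(\<lambda>\<omega>. xs i \<omega>) \<in> borel_measurable M" for i
    using XE measurable_component_singleton[of i UNIV "\<lambda>_. borel"]
    by (auto simp: indep_rvs_def dest: measurable_compose)
  have [measurable]: "eps i \<in> borel_measurable M" for i
    using eps_indep by (simp add: indep_vars_def)
  have [measurable]: "(\<lambda>\<omega>. f (xs i \<omega>)) \<in> borel_measurable M" for i
    by (rule borel_measurable_rkhs_comp[OF k_meas f]) (simp_all add: xs_in)
  have [measurable]: "(\<lambda>\<omega>. k x (xs i \<omega>)) \<in> borel_measurable M" for i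
    by (rule borel_measurable_kernel_comp[OF k_meas]) simp_all
  have [measurable]: "(\<lambda>\<omega>. w \<omega> $ j) \<in> borel_measurable M" for j
    unfolding w_def by (rule borel_measurable_krr_weights[OF k_meas]) simp
  have "G = {\<omega> \<in> space M. c * (f x - w \<omega> \<bullet> (\<chi> i. f (xs i \<omega>) + eps i \<omega>))
                 \<le> (B + R / lam * s) * sqrt (k x x - w \<omega> \<bullet> kvec k x (\<lambda>i. xs i \<omega>))}"
  proof -
    have "post_mean k lam (\<lambda>i. xs i \<omega>) Y x = w \<omega> \<bullet> Y"
      and "post_var k lam (\<lambda>i. xs i \<omega>) x = k x x - w \<omega> \<bullet> kvec k x (\<lambda>i. xs i \<omega>)"
      if "\<omega> \<in> space M" for \<omega> Y
      using post_mean_eq_krr_weights[OF pd xs_in[OF that] \<open>lam > 0\<close>]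
        post_var_eq_krr_weights[OF pd xs_in[OF that] \<open>lam > 0\<close>] by (simp_all add: w_def)
    then show ?thesis by (auto simp: G_def)
  qed
  then have "G \<in> events" by (simp add: inner_vec_def kvec_def)
  have "Bad \<in> events" unfolding Bad_def by measurable
  have "prob Bad \<le> \<delta>"
    unfolding Bad_def w_def s_def
  proof (rule subgaussian_design_weighted_tail[OF XE eps_indep eps_subg \<open>R > 0\<close> \<open>0 < \<delta>\<close> \<open>\<delta> \<le> 1\<close>])
    show "(\<lambda>\<xi>. - c * krr_weights k lam x \<xi> $ i) \<in> borel_measurable (Pi\<^sub>M UNIV (\<lambda>_. borel))" for i
      by (intro borel_measurable_times borel_measurable_const borel_measurable_krr_weights[OF k_meas]) simp
  qed
  have "space M - G \<subseteq> Bad"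
  proof
    fix \<omega> assume \<omega>: "\<omega> \<in> space M - G"
    have "\<And>i. xs i \<omega> \<in> X" using \<omega> xs_in by blast
    moreover have "s \<ge> 0" using \<open>0 < \<delta>\<close> \<open>\<delta> \<le> 1\<close> by (simp add: s_def)
    ultimately have "\<not> - c * (w \<omega> \<bullet> (\<chi> i. eps i \<omega>)) \<le> R * norm (w \<omega>) * s"
      using \<omega> krr_confidence_pointwise[where \<xi> = "\<lambda>i. xs i \<omega>" and e = "\<lambda>i. eps i \<omega>" and R = R and s = s,
          OF pd f _ x \<open>lam > 0\<close> \<open>B \<ge> 0\<close> _ _ \<open>\<bar>c\<bar> = 1\<close>] \<open>R > 0\<close>
      by (auto simp: G_def w_def)
    moreover have "(\<Sum>i\<in>UNIV. - c * w \<omega> $ i * eps i \<omega>) = - c * (w \<omega> \<bullet> (\<chi> i. eps i \<omega>))"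
      by (simp add: inner_vec_def sum_distrib_left mult.assoc)
    moreover have "sqrt (\<Sum>i\<in>UNIV. (- c * w \<omega> $ i)\<^sup>2) = norm (w \<omega>)"
      using power2_abs[of c] \<open>\<bar>c\<bar> = 1\<close> by (simp add: norm_vec_def L2_set_def power_mult_distrib)
    ultimately show "\<omega> \<in> Bad" using \<omega> by (simp add: Bad_def not_le)
  qed
  then have "prob (space M - G) \<le> \<delta>"
    using \<open>prob Bad \<le> \<delta>\<close> \<open>Bad \<in> events\<close> finite_measure_mono order_trans by blast
  then show ?thesis using prob_compl[OF \<open>G \<in> events\<close>] by (simp add: G_def s_def)
qed

theorem theorem1:
  fixes X :: "'a::euclidean_space set"
    and k :: "'a \<Rightarrow> 'a \<Rightarrow> real"
    and f :: "'a \<Rightarrow> real"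
    and M :: "'w measure"
    and xs :: "'n::finite \<Rightarrow> 'w \<Rightarrow> 'a"
    and eps :: "'n \<Rightarrow> 'w \<Rightarrow> real"
    and B lam R \<delta> :: real
    and x :: 'a
  assumes pd: "pd_kernel X k"
    and k_meas: "(\<lambda>(u, v). k u v) \<in> borel_measurable borel"
    and f_rkhs: "in_rkhs_norm_le X k f B"
    and B_pos: "B > 0"
    and lam_pos: "lam > 0"
    and R_pos: "R > 0"
    and P: "prob_space M"
    and xs_in: "\<forall>i. \<forall>\<omega>\<in>space M. xs i \<omega> \<in> X"
    and eps_indep: "prob_space.indep_vars M (\<lambda>_. borel) eps UNIV"
    and eps_ident: "\<forall>i j. distr M borel (eps i) = distr M borel (eps j)"
    and eps_subg: "\<forall>i. \<forall>h::real. integrable M (\<lambda>\<omega>. exp (h * eps i \<omega>)) \<and>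
                     prob_space.expectation M (\<lambda>\<omega>. exp (h * eps i \<omega>)) \<le> exp (h\<^sup>2 * R\<^sup>2 / 2)"
    and X_E_indep: "prob_space.indep_rvs M
                      (Pi\<^sub>M UNIV (\<lambda>_. borel)) (\<lambda>\<omega>. \<lambda>i. xs i \<omega>)
                      (Pi\<^sub>M UNIV (\<lambda>_. borel)) (\<lambda>\<omega>. \<lambda>i. eps i \<omega>)"
    and x_in: "x \<in> X"
    and delta: "0 < \<delta>" "\<delta> < 1"
  shows "prob_space.prob M {\<omega> \<in> space M.
           f x \<le> post_mean k lam (\<lambda>i. xs i \<omega>) (\<chi> i. f (xs i \<omega>) + eps i \<omega>) x
                  + (B + R / lam * sqrt (2 * ln (1 / \<delta>))) * sqrt (post_var k lam (\<lambda>i. xs i \<omega>) x)}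
           \<ge> 1 - \<delta>
       \<and> prob_space.prob M {\<omega> \<in> space M.
           f x \<ge> post_mean k lam (\<lambda>i. xs i \<omega>) (\<chi> i. f (xs i \<omega>) + eps i \<omega>) x
                  - (B + R / lam * sqrt (2 * ln (1 / \<delta>))) * sqrt (post_var k lam (\<lambda>i. xs i \<omega>) x)}
           \<ge> 1 - \<delta>"
proof -
  interpret prob_space M by (rule P)
  have "1 - \<delta> \<le> prob {\<omega> \<in> space M.
           c * (f x - post_mean k lam (\<lambda>i. xs i \<omega>) (\<chi> i. f (xs i \<omega>) + eps i \<omega>) x)
             \<le> (B + R / lam * sqrt (2 * ln (1 / \<delta>))) * sqrt (post_var k lam (\<lambda>i. xs i \<omega>) x)}"
    if "\<bar>c\<bar> = 1" for c
    using krr_one_sided_confidence[OF pd k_meas f_rkhs _ lam_pos R_pos _ eps_indep _ X_E_indep x_in]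
      B_pos xs_in eps_subg delta that by simp
  from this[of 1] this[of "-1"] show ?thesis by (simp add: algebra_simps)
qed

end
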